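(* Let $X$ be a space with a map $T:X\to X$ and a (not necessarily invariant) reference probability measure $\mu$, and let $\alpha=\{A_1,\dots,A_r\}$ be a finite measurable partition of $X$. For every recursive reversible compression algorithm $Z$ on the alphabet $\{1,\dots,r\}$, $q_Z(X,T,\alpha)\ge q_{AIC}(X,T,\alpha)$.
   Context: $\varphi_\alpha(x)=\omega\in\{1,\dots,r\}^{\mathbb{N}}$ is defined by $T^j(x)\in A_{\omega_j}$ for all $j$; $\Omega_\alpha=\varphi_\alpha(X)$ and $\mu_\alpha$ is the measure on $\Omega_\alpha$ defined on cylinders by $\mu_\alpha(\{\bar\omega:\bar\omega_i=\omega_i, k\le i\le n-1\})=\mu(\bigcap_{i=k}^{n-1}T^{-i}A_{\omega_i})$. A recursive reversible compression algorithm is an injective recursive map $Z$ from finite strings to binary strings, $I_Z(s)=|Z(s)|$; $AIC(s)=\min\{|P|:C(P)=s\}$ for a fixed universal computing machine $C$. For $I\in\{AIC,I_Z\}$, $I(x,\alpha,n)=I(\omega^n)$ with $\omega=\varphi_\alpha(x)$ and $\omega^n$ its first $n$ symbols, and the $q$-entropy relative to $\alpha$ is $h^q(X,\alpha)=\limsup_{n\to\infty}\int_{\Omega_\alpha}\frac{I(\omega^n)}{n^q}\,d\mu_\alpha(\omega)$. The intermittent chaos index is $q(X,T,\alpha)=\inf\{p>0:h^p(X,\alpha)=0\}$; $q_{AIC}$, $q_Z$ are this index for $I=AIC$, $I=I_Z$. *)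

theory Defs
  imports "HOL-Probability.Probability" "HOL-Library.Nat_Bijection"
begin

datatype recf = Zero | Succ | Proj nat | Comp recf "recf list" | PrimRec recf recf | Mu recf

inductive rec_eval :: "recf \<Rightarrow> nat list \<Rightarrow> nat \<Rightarrow> bool" where
  zero: "rec_eval Zero xs 0"
| succ: "rec_eval Succ (x # xs) (Suc x)"
| proj: "i < length xs \<Longrightarrow> rec_eval (Proj i) xs (xs ! i)"
| comp: "length ys = length gs \<Longrightarrow> (\<forall>i<length gs. rec_eval (gs ! i) xs (ys ! i))
           \<Longrightarrow> rec_eval f ys z \<Longrightarrow> rec_eval (Comp f gs) xs z"
| pr0: "rec_eval f xs y \<Longrightarrow> rec_eval (PrimRec f g) (0 # xs) y"
| prS: "rec_eval (PrimRec f g) (n # xs) y \<Longrightarrow> rec_eval g (n # y # xs) z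
           \<Longrightarrow> rec_eval (PrimRec f g) (Suc n # xs) z"
| mu: "rec_eval f (y # xs) 0 \<Longrightarrow> (\<forall>i<y. \<exists>v. rec_eval f (i # xs) v \<and> 0 < v)
           \<Longrightarrow> rec_eval (Mu f) xs y"

definition str_code :: "nat list \<Rightarrow> nat" where
  "str_code s = list_encode s"

definition bin_code :: "bool list \<Rightarrow> nat" where
  "bin_code P = list_encode (map of_bool P)"

definition partial_recursive_machine :: "(bool list \<Rightarrow> nat list option) \<Rightarrow> bool" where
  "partial_recursive_machine D \<longleftrightarrow>
     (\<exists>e. \<forall>P y. rec_eval e [bin_code P] y \<longleftrightarrow> (\<exists>s. D P = Some s \<and> y = str_code s))"

definition universal_machine :: "(bool list \<Rightarrow> nat list option) \<Rightarrow> bool" where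
  "universal_machine C \<longleftrightarrow> partial_recursive_machine C \<and>
     (\<forall>D. partial_recursive_machine D \<longrightarrow> (\<exists>p. \<forall>P. C (p @ P) = D P))"

definition AIC :: "(bool list \<Rightarrow> nat list option) \<Rightarrow> nat list \<Rightarrow> nat" where
  "AIC C s = (LEAST n. \<exists>P. C P = Some s \<and> length P = n)"

definition recursive_reversible_compression :: "nat \<Rightarrow> (nat list \<Rightarrow> bool list) \<Rightarrow> bool" where
  "recursive_reversible_compression r Z \<longleftrightarrow>
     inj_on Z (lists {1..r}) \<and>
     (\<exists>e. \<forall>s\<in>lists {1..r}. \<forall>y. rec_eval e [str_code s] y \<longleftrightarrow> y = bin_code (Z s))"

definition I_Z :: "(nat list \<Rightarrow> bool list) \<Rightarrow> nat list \<Rightarrow> nat" where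
  "I_Z Z s = length (Z s)"

definition symb :: "nat \<Rightarrow> ('a \<Rightarrow> 'a) \<Rightarrow> (nat \<Rightarrow> 'a set) \<Rightarrow> 'a \<Rightarrow> nat \<Rightarrow> nat" where
  "symb r T A x = (\<lambda>j. THE i. i \<in> {1..r} \<and> (T ^^ j) x \<in> A i)"

definition prefix_str :: "(nat \<Rightarrow> nat) \<Rightarrow> nat \<Rightarrow> nat list" where
  "prefix_str \<omega> n = map \<omega> [0..<n]"

text \<open>Sequence space with the product (cylinder) sigma-algebra; mu_alpha is the image of mu
  under phi_alpha, which is the measure determined by the cylinder formula.\<close>

definition seq_space :: "(nat \<Rightarrow> nat) measure" where
  "seq_space = Pi\<^sub>M UNIV (\<lambda>_. count_space UNIV)"

definition mu_alpha :: "'a measure \<Rightarrow> nat \<Rightarrow> ('a \<Rightarrow> 'a) \<Rightarrow> (nat \<Rightarrow> 'a set) \<Rightarrow> (nat \<Rightarrow> nat) measure" where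
  "mu_alpha M r T A = distr M seq_space (symb r T A)"

definition q_entropy :: "'a measure \<Rightarrow> nat \<Rightarrow> ('a \<Rightarrow> 'a) \<Rightarrow> (nat \<Rightarrow> 'a set)
    \<Rightarrow> (nat list \<Rightarrow> nat) \<Rightarrow> real \<Rightarrow> ennreal" where
  "q_entropy M r T A I q =
     limsup (\<lambda>n. \<integral>\<^sup>+ \<omega>. ennreal (real (I (prefix_str \<omega> n)) / real n powr q) \<partial>(mu_alpha M r T A))"

definition chaos_index :: "'a measure \<Rightarrow> nat \<Rightarrow> ('a \<Rightarrow> 'a) \<Rightarrow> (nat \<Rightarrow> 'a set)
    \<Rightarrow> (nat list \<Rightarrow> nat) \<Rightarrow> ereal" where
  "chaos_index M r T A I = Inf (ereal ` {p. p > 0 \<and> q_entropy M r T A I p = 0})"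

end

theory Submission
  imports Defs
begin

text \<open>Since Z is injective and computable, its inverse on Z ` lists {1..r} is partial recursive:
  given a binary string, search for the least code of a string over {1..r} whose compression it
  is. A universal machine runs this decompressor after a fixed prefix p, so
  AIC s \<le> I_Z s + |p| for every string s over {1..r}. After division by n^p the constant
  vanishes, hence every p with vanishing q-entropy for I_Z also has vanishing q-entropy for AIC,
  and the infimum defining q_AIC is taken over a larger set.\<close>

section \<open>Kleene recursive functions\<close>

lemma rec_eval_Zero [simp]: "rec_eval Zero xs y \<longleftrightarrow> y = 0"
  by (auto elim: rec_eval.cases intro: rec_eval.intros)

lemma rec_eval_Succ [simp]: "rec_eval Succ xs y \<longleftrightarrow> xs \<noteq> [] \<and> y = Suc (hd xs)"
  by (cases xs) (auto elim: rec_eval.cases intro: rec_eval.intros)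

lemma rec_eval_Proj [simp]: "rec_eval (Proj i) xs y \<longleftrightarrow> i < length xs \<and> y = xs ! i"
  by (auto elim: rec_eval.cases intro: rec_eval.intros)

lemma rec_eval_Comp:
  "rec_eval (Comp f gs) xs z \<longleftrightarrow> (\<exists>ys. list_all2 (\<lambda>g y. rec_eval g xs y) gs ys \<and> rec_eval f ys z)"
proof -
  have "rec_eval (Comp f gs) xs z \<longleftrightarrow>
      (\<exists>ys. length ys = length gs \<and> (\<forall>i<length gs. rec_eval (gs ! i) xs (ys ! i)) \<and> rec_eval f ys z)"
    by (auto elim: rec_eval.cases intro: rec_eval.intros)
  then show ?thesis
    unfolding list_all2_conv_all_nth by metis
qed

lemma rec_eval_PrimRec_0 [simp]: "rec_eval (PrimRec f g) (0 # xs) y \<longleftrightarrow> rec_eval f xs y"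
  by (auto elim: rec_eval.cases intro: rec_eval.intros)

lemma rec_eval_PrimRec_Suc [simp]:
  "rec_eval (PrimRec f g) (Suc n # xs) z \<longleftrightarrow>
     (\<exists>y. rec_eval (PrimRec f g) (n # xs) y \<and> rec_eval g (n # y # xs) z)"
  by (auto elim: rec_eval.cases intro: rec_eval.intros)

lemma rec_eval_Mu:
  "rec_eval (Mu f) xs y \<longleftrightarrow> rec_eval f (y # xs) 0 \<and> (\<forall>i<y. \<exists>v. rec_eval f (i # xs) v \<and> 0 < v)"
  by (auto elim: rec_eval.cases intro: rec_eval.intros)

definition computes :: "nat \<Rightarrow> recf \<Rightarrow> (nat list \<Rightarrow> nat) \<Rightarrow> bool" where
  "computes n f F \<longleftrightarrow> (\<forall>xs y. length xs = n \<longrightarrow> (rec_eval f xs y \<longleftrightarrow> y = F xs))"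

lemma computesD: "computes n f F \<Longrightarrow> length xs = n \<Longrightarrow> rec_eval f xs y \<longleftrightarrow> y = F xs"
  unfolding computes_def by blast

lemma computes_cong: "computes n f F \<Longrightarrow> (\<And>xs. length xs = n \<Longrightarrow> F xs = G xs) \<Longrightarrow> computes n f G"
  by (simp add: computes_def)

lemma computes_Zero: "computes n Zero (\<lambda>_. 0)"
  by (simp add: computes_def)

lemma computes_Succ: "computes 1 Succ (\<lambda>xs. Suc (xs ! 0))"
  by (auto simp add: computes_def length_Suc_conv)

lemma computes_Proj: "i < n \<Longrightarrow> computes n (Proj i) (\<lambda>xs. xs ! i)"
  by (auto simp add: computes_def)

lemma computes_Comp:
  assumes "computes (length gs) f F" and "list_all2 (\<lambda>g G. computes n g G) gs Gs"
  shows "computes n (Comp f gs) (\<lambda>xs. F (map (\<lambda>G. G xs) Gs))"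
  unfolding computes_def
proof (intro allI impI)
  fix xs :: "nat list" and z
  assume "length xs = n"
  with assms(2) have component: "rec_eval (gs ! i) xs y \<longleftrightarrow> y = (Gs ! i) xs" if "i < length gs" for i y
    using that by (metis computesD list_all2_conv_all_nth)
  have "list_all2 (\<lambda>g y. rec_eval g xs y) gs ys \<longleftrightarrow> ys = map (\<lambda>G. G xs) Gs" for ys
    using assms(2) by (auto simp: list_all2_conv_all_nth component intro: nth_equalityI)
  moreover have "length (map (\<lambda>G. G xs) Gs) = length gs"
    using assms(2) by (simp add: list_all2_lengthD)
  ultimately show "rec_eval (Comp f gs) xs z \<longleftrightarrow> z = F (map (\<lambda>G. G xs) Gs)"
    using computesD[OF assms(1)] by (auto simp: rec_eval_Comp)
qed

lemma computes_Comp1: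
  "computes 1 f F \<Longrightarrow> computes n g G \<Longrightarrow> computes n (Comp f [g]) (\<lambda>xs. F [G xs])"
  using computes_Comp[where gs = "[g]" and Gs = "[G]"] by simp

lemma computes_Comp2:
  "computes 2 f F \<Longrightarrow> computes n g1 G1 \<Longrightarrow> computes n g2 G2 \<Longrightarrow>
     computes n (Comp f [g1, g2]) (\<lambda>xs. F [G1 xs, G2 xs])"
  using computes_Comp[where gs = "[g1, g2]" and Gs = "[G1, G2]"] by (simp add: numeral_2_eq_2)

lemma computes_PrimRec:
  assumes "computes n f F" and "computes (Suc (Suc n)) g G"
  shows "computes (Suc n) (PrimRec f g) (\<lambda>xs. rec_nat (F (tl xs)) (\<lambda>k y. G (k # y # tl xs)) (hd xs))"
  unfolding computes_def
proof (intro allI impI)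
  fix xs :: "nat list" and y
  assume "length xs = Suc n"
  then obtain k ys where xs: "xs = k # ys" and len: "length ys = n"
    by (cases xs) auto
  have "rec_eval (PrimRec f g) (k # ys) y \<longleftrightarrow> y = rec_nat (F ys) (\<lambda>k y. G (k # y # ys)) k" for y
    by (induction k arbitrary: y) (auto simp: computesD[OF assms(1) len] computesD[OF assms(2)] len)
  then show "rec_eval (PrimRec f g) xs y \<longleftrightarrow> y = rec_nat (F (tl xs)) (\<lambda>k y. G (k # y # tl xs)) (hd xs)"
    by (simp add: xs)
qed

lemma computes_PrimRec1:
  assumes "computes 0 f F" and "computes 2 g G"
  shows "computes 1 (PrimRec f g) (\<lambda>xs. rec_nat (F []) (\<lambda>k y. G [k, y]) (xs ! 0))"
proof -
  have "computes 1 (PrimRec f g) (\<lambda>xs. rec_nat (F (tl xs)) (\<lambda>k y. G (k # y # tl xs)) (hd xs))"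
    using computes_PrimRec[of 0 f F g G] assms by (simp add: numeral_2_eq_2)
  then show ?thesis
    by (rule computes_cong) (auto simp: length_Suc_conv)
qed

lemma computes_PrimRec2:
  assumes "computes 1 f F" and "computes 3 g G"
  shows "computes 2 (PrimRec f g) (\<lambda>xs. rec_nat (F [xs ! 1]) (\<lambda>k y. G [k, y, xs ! 1]) (xs ! 0))"
proof -
  have "computes 2 (PrimRec f g) (\<lambda>xs. rec_nat (F (tl xs)) (\<lambda>k y. G (k # y # tl xs)) (hd xs))"
    using computes_PrimRec[of 1 f F g G] assms by (simp add: numeral_2_eq_2 numeral_3_eq_3)
  then show ?thesis
    by (rule computes_cong) (auto simp: length_Suc_conv numeral_2_eq_2)
qed

lemma rec_eval_Mu_computes:
  assumes "computes (Suc n) f F" and "length xs = n"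
  shows "rec_eval (Mu f) xs y \<longleftrightarrow> F (y # xs) = 0 \<and> (\<forall>i<y. F (i # xs) \<noteq> 0)"
  using assms by (auto simp: rec_eval_Mu computesD)

lemma computes_Mu1:
  assumes "computes 2 f F" and "\<And>a. \<exists>y. F [y, a] = 0"
  shows "computes 1 (Mu f) (\<lambda>xs. LEAST y. F [y, xs ! 0] = 0)"
  unfolding computes_def
proof (intro allI impI)
  fix xs :: "nat list" and y
  assume "length xs = 1"
  then obtain a where xs: "xs = [a]"
    by (auto simp: length_Suc_conv)
  have "rec_eval (Mu f) [a] y \<longleftrightarrow> F [y, a] = 0 \<and> (\<forall>i<y. F [i, a] \<noteq> 0)"
    using rec_eval_Mu_computes[of 1 f F "[a]"] assms(1) by (simp add: numeral_2_eq_2)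
  also have "\<dots> \<longleftrightarrow> y = (LEAST y. F [y, a] = 0)"
    using assms(2)[of a] by (metis (mono_tags, lifting) LeastI_ex Least_le not_less_Least le_neq_implies_less)
  finally show "rec_eval (Mu f) xs y \<longleftrightarrow> y = (LEAST y. F [y, xs ! 0] = 0)"
    by (simp add: xs)
qed

section \<open>Arithmetic and Cantor pairing\<close>

fun const_rf :: "nat \<Rightarrow> recf" where
  "const_rf 0 = Zero"
| "const_rf (Suc k) = Comp Succ [const_rf k]"

lemma computes_const_rf: "computes n (const_rf k) (\<lambda>_. k)"
proof (induction k)
  case 0
  show ?case by (simp add: computes_Zero)
next
  case (Suc k)
  show ?case
    unfolding const_rf.simps by (rule computes_cong[OF computes_Comp1[OF computes_Succ Suc]]) simp
qed

definition add_rf :: recf where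
  "add_rf = PrimRec (Proj 0) (Comp Succ [Proj 1])"

lemma computes_add_rf: "computes 2 add_rf (\<lambda>xs. xs ! 0 + xs ! 1)"
proof -
  have "rec_nat b (\<lambda>k y. Suc y) a = a + b" for a b :: nat
    by (induction a) auto
  then show ?thesis
    unfolding add_rf_def
    by (intro computes_cong[OF computes_PrimRec2[OF computes_Proj computes_Comp1[OF computes_Succ computes_Proj]]])
       (auto simp: numeral_3_eq_3)
qed

definition pred_rf :: recf where
  "pred_rf = PrimRec Zero (Proj 0)"

lemma computes_pred_rf: "computes 1 pred_rf (\<lambda>xs. xs ! 0 - 1)"
proof -
  have "rec_nat 0 (\<lambda>k y. k) a = a - 1" for a :: nat
    by (cases a) auto
  then show ?thesis
    unfolding pred_rf_def
    by (intro computes_cong[OF computes_PrimRec1[OF computes_Zero computes_Proj]]) (auto simp: numeral_2_eq_2)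
qed

definition diff_rf :: recf where
  "diff_rf = Comp (PrimRec (Proj 0) (Comp pred_rf [Proj 1])) [Proj 1, Proj 0]"

lemma computes_diff_rf: "computes 2 diff_rf (\<lambda>xs. xs ! 0 - xs ! 1)"
proof -
  have "rec_nat a (\<lambda>k y. y - 1) b = a - b" for a b :: nat
    by (induction b) auto
  then show ?thesis
    unfolding diff_rf_def
    by (intro computes_cong[OF computes_Comp2[OF computes_PrimRec2[OF computes_Proj
          computes_Comp1[OF computes_pred_rf computes_Proj]] computes_Proj computes_Proj]])
       (auto simp: numeral_3_eq_3)
qed

definition not_rf :: recf where
  "not_rf = Comp diff_rf [const_rf 1, Proj 0]"

lemma computes_not_rf: "computes 1 not_rf (\<lambda>xs. 1 - xs ! 0)"
  unfolding not_rf_def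
  by (rule computes_cong[OF computes_Comp2[OF computes_diff_rf computes_const_rf computes_Proj]]) auto

definition neq_rf :: recf where
  "neq_rf = Comp not_rf [Comp not_rf [Comp add_rf [diff_rf, Comp diff_rf [Proj 1, Proj 0]]]]"

lemma computes_neq_rf: "computes 2 neq_rf (\<lambda>xs. of_bool (xs ! 0 \<noteq> xs ! 1))"
  unfolding neq_rf_def
  by (rule computes_cong[OF computes_Comp1[OF computes_not_rf computes_Comp1[OF computes_not_rf
        computes_Comp2[OF computes_add_rf computes_diff_rf
          computes_Comp2[OF computes_diff_rf computes_Proj computes_Proj]]]]]) auto

definition triangle_rf :: recf where
  "triangle_rf = PrimRec Zero (Comp add_rf [Comp Succ [Proj 0], Proj 1])"

lemma computes_triangle_rf: "computes 1 triangle_rf (\<lambda>xs. triangle (xs ! 0))"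
proof -
  have "rec_nat 0 (\<lambda>k y. Suc k + y) b = triangle b" for b
    by (induction b) auto
  then show ?thesis
    unfolding triangle_rf_def
    by (intro computes_cong[OF computes_PrimRec1[OF computes_Zero computes_Comp2[OF computes_add_rf
          computes_Comp1[OF computes_Succ computes_Proj] computes_Proj]]])
       (auto simp: numeral_2_eq_2)
qed

lemma prod_decode_triangle_eq:
  "n = triangle (fst (prod_decode n) + snd (prod_decode n)) + fst (prod_decode n)"
proof -
  obtain x y where xy: "prod_decode n = (x, y)"
    by fastforce
  then have "prod_encode (x, y) = n"
    by (metis prod_decode_inverse)
  with xy show ?thesis
    by (simp add: prod_encode_def)
qed

lemma Least_triangle_gt:
  "(LEAST s. Suc n - triangle (Suc s) = 0) = fst (prod_decode n) + snd (prod_decode n)"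
proof (rule Least_equality)
  let ?x = "fst (prod_decode n)" and ?y = "snd (prod_decode n)"
  have n: "n = triangle (?x + ?y) + ?x"
    by (rule prod_decode_triangle_eq)
  then show "Suc n - triangle (Suc (?x + ?y)) = 0"
    by simp
  fix s
  assume "Suc n - triangle (Suc s) = 0"
  then have "n < triangle (Suc s)"
    by simp
  show "?x + ?y \<le> s"
  proof (rule ccontr)
    assume "\<not> ?x + ?y \<le> s"
    then have "triangle (Suc s) \<le> triangle (?x + ?y)"
      unfolding triangle_def by (intro div_le_mono mult_le_mono) auto
    with \<open>n < triangle (Suc s)\<close> n show False
      by simp
  qed
qed

text \<open>Since prod_encode (x, y) = triangle (x + y) + x, the diagonal x + y of n is the least s
  with n < triangle (s + 1).\<close>

definition diagonal_rf :: recf where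
  "diagonal_rf = Mu (Comp diff_rf [Comp Succ [Proj 1], Comp triangle_rf [Comp Succ [Proj 0]]])"

lemma computes_diagonal_rf:
  "computes 1 diagonal_rf (\<lambda>xs. fst (prod_decode (xs ! 0)) + snd (prod_decode (xs ! 0)))"
proof -
  have "computes 2 (Comp diff_rf [Comp Succ [Proj 1], Comp triangle_rf [Comp Succ [Proj 0]]])
      (\<lambda>xs. Suc (xs ! 1) - triangle (Suc (xs ! 0)))"
    by (rule computes_cong[OF computes_Comp2[OF computes_diff_rf computes_Comp1[OF computes_Succ computes_Proj]
          computes_Comp1[OF computes_triangle_rf computes_Comp1[OF computes_Succ computes_Proj]]]]) auto
  then have "computes 1 diagonal_rf (\<lambda>xs. LEAST y. Suc (xs ! 0) - triangle (Suc y) = 0)"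
    unfolding diagonal_rf_def
  proof (rule computes_cong[OF computes_Mu1])
    show "\<exists>y. Suc ([y, a] ! 1) - triangle (Suc ([y, a] ! 0)) = 0" for a
      by (rule exI[of _ a]) simp
  qed simp
  then show ?thesis
    by (rule computes_cong) (simp only: Least_triangle_gt)
qed

definition fst_rf :: recf where
  "fst_rf = Comp diff_rf [Proj 0, Comp triangle_rf [diagonal_rf]]"

lemma computes_fst_rf: "computes 1 fst_rf (\<lambda>xs. fst (prod_decode (xs ! 0)))"
  unfolding fst_rf_def
  by (rule computes_cong[OF computes_Comp2[OF computes_diff_rf computes_Proj
        computes_Comp1[OF computes_triangle_rf computes_diagonal_rf]]])
     (auto, metis prod_decode_triangle_eq add_diff_cancel_left')

definition snd_rf :: recf where
  "snd_rf = Comp diff_rf [diagonal_rf, fst_rf]"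

lemma computes_snd_rf: "computes 1 snd_rf (\<lambda>xs. snd (prod_decode (xs ! 0)))"
  unfolding snd_rf_def
  by (rule computes_cong[OF computes_Comp2[OF computes_diff_rf computes_diagonal_rf computes_fst_rf]]) auto

section \<open>Codes of lists\<close>

text \<open>A nonzero list code m encodes the pair (head, tail code) as m - 1.\<close>

definition hd_code :: "nat \<Rightarrow> nat" where
  "hd_code m = fst (prod_decode (m - 1))"

definition tl_code :: "nat \<Rightarrow> nat" where
  "tl_code m = snd (prod_decode (m - 1))"

lemma list_decode_nonzero: "m \<noteq> 0 \<Longrightarrow> list_decode m = hd_code m # list_decode (tl_code m)"
  by (cases m) (auto simp: hd_code_def tl_code_def split: prod.split)

lemma list_decode_eq_Nil_iff: "list_decode m = [] \<longleftrightarrow> m = 0"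
  by (metis list_decode.simps(1) list_decode_inverse list_encode.simps(1))

lemma list_decode_tl_code: "list_decode (tl_code m) = tl (list_decode m)"
proof (cases "m = 0")
  case True
  then show ?thesis
    by (simp add: tl_code_def prod_decode_def prod_decode_aux.simps)
qed (simp add: list_decode_nonzero)

lemma list_decode_funpow_tl_code: "list_decode ((tl_code ^^ j) m) = drop j (list_decode m)"
  by (induction j) (auto simp: list_decode_tl_code drop_Suc tl_drop)

lemma length_list_decode_le: "length (list_decode m) \<le> m"
proof -
  have "length xs \<le> list_encode xs" for xs
    by (induction xs) (auto simp: le_prod_encode_2 intro: le_trans)
  then show ?thesis
    by (metis list_decode_inverse)
qed

definition hd_rf :: recf where
  "hd_rf = Comp fst_rf [pred_rf]"

lemma computes_hd_rf: "computes 1 hd_rf (\<lambda>xs. hd_code (xs ! 0))"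
  unfolding hd_rf_def hd_code_def
  by (rule computes_cong[OF computes_Comp1[OF computes_fst_rf computes_pred_rf]]) auto

definition tl_rf :: recf where
  "tl_rf = Comp snd_rf [pred_rf]"

lemma computes_tl_rf: "computes 1 tl_rf (\<lambda>xs. tl_code (xs ! 0))"
  unfolding tl_rf_def tl_code_def
  by (rule computes_cong[OF computes_Comp1[OF computes_snd_rf computes_pred_rf]]) auto

definition iter_tl_rf :: recf where
  "iter_tl_rf = PrimRec (Proj 0) (Comp tl_rf [Proj 1])"

lemma computes_iter_tl_rf: "computes 2 iter_tl_rf (\<lambda>xs. (tl_code ^^ (xs ! 0)) (xs ! 1))"
proof -
  have "rec_nat m (\<lambda>k y. tl_code y) j = (tl_code ^^ j) m" for m j
    by (induction j) auto
  then show ?thesis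
    unfolding iter_tl_rf_def
    by (intro computes_cong[OF computes_PrimRec2[OF computes_Proj computes_Comp1[OF computes_tl_rf computes_Proj]]])
       (auto simp: numeral_3_eq_3)
qed

definition bad_symbol :: "nat \<Rightarrow> nat \<Rightarrow> bool" where
  "bad_symbol r m \<longleftrightarrow> m \<noteq> 0 \<and> hd_code m \<notin> {1..r}"

lemma list_decode_in_lists_iff:
  "list_decode m \<in> lists {1..r} \<longleftrightarrow> (\<forall>j<m. \<not> bad_symbol r ((tl_code ^^ j) m))"
proof -
  let ?L = "list_decode m"
  have nonzero: "(tl_code ^^ j) m \<noteq> 0 \<longleftrightarrow> j < length ?L" for j
    by (metis list_decode_eq_Nil_iff list_decode_funpow_tl_code drop_eq_Nil not_le)
  have hd: "hd_code ((tl_code ^^ j) m) = ?L ! j" if "j < length ?L" for j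
    using that nonzero[of j] list_decode_nonzero[of "(tl_code ^^ j) m"]
    by (metis list_decode_funpow_tl_code nth_via_drop)
  have good: "\<not> bad_symbol r ((tl_code ^^ j) m) \<longleftrightarrow> (j < length ?L \<longrightarrow> ?L ! j \<in> {1..r})" for j
    using nonzero[of j] hd[of j] by (auto simp: bad_symbol_def)
  have "?L \<in> lists {1..r} \<longleftrightarrow> (\<forall>j<length ?L. ?L ! j \<in> {1..r})"
    by (simp only: in_lists_conv_set all_set_conv_all_nth)
  also have "\<dots> \<longleftrightarrow> (\<forall>j<m. \<not> bad_symbol r ((tl_code ^^ j) m))"
    unfolding good using length_list_decode_le[of m] by (meson less_le_trans)
  finally show ?thesis .
qed

text \<open>On 0/1 values, 1 - x is negation and x + y disjunction; with h = hd_code m this computes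
  \<not> (m = 0 \<or> \<not> (h = 0 \<or> h > r)).\<close>

definition bad_symbol_rf :: "nat \<Rightarrow> recf" where
  "bad_symbol_rf r = Comp diff_rf [const_rf 1, Comp add_rf [Comp not_rf [Proj 0],
     Comp not_rf [Comp add_rf [Comp not_rf [hd_rf], Comp diff_rf [hd_rf, const_rf r]]]]]"

lemma computes_bad_symbol_rf: "computes 1 (bad_symbol_rf r) (\<lambda>xs. of_bool (bad_symbol r (xs ! 0)))"
  unfolding bad_symbol_rf_def
  by (rule computes_cong[OF computes_Comp2[OF computes_diff_rf computes_const_rf
        computes_Comp2[OF computes_add_rf computes_Comp1[OF computes_not_rf computes_Proj]
          computes_Comp1[OF computes_not_rf computes_Comp2[OF computes_add_rf
            computes_Comp1[OF computes_not_rf computes_hd_rf]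
            computes_Comp2[OF computes_diff_rf computes_hd_rf computes_const_rf]]]]]])
     (auto simp: bad_symbol_def)

definition count_bad_rf :: "nat \<Rightarrow> recf" where
  "count_bad_rf r = PrimRec Zero (Comp add_rf [Proj 1, Comp (bad_symbol_rf r) [Comp iter_tl_rf [Proj 0, Proj 2]]])"

lemma computes_count_bad_rf:
  "computes 2 (count_bad_rf r) (\<lambda>xs. \<Sum>j<xs ! 0. of_bool (bad_symbol r ((tl_code ^^ j) (xs ! 1))))"
proof -
  have "rec_nat 0 (\<lambda>k y. y + of_bool (bad_symbol r ((tl_code ^^ k) m))) a =
      (\<Sum>j<a. of_bool (bad_symbol r ((tl_code ^^ j) m)))" for a m
    by (induction a) (auto simp del: sum_of_bool_eq)
  then show ?thesis
    unfolding count_bad_rf_def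
    by (intro computes_cong[OF computes_PrimRec2[OF computes_Zero computes_Comp2[OF computes_add_rf computes_Proj
          computes_Comp1[OF computes_bad_symbol_rf computes_Comp2[OF computes_iter_tl_rf computes_Proj computes_Proj]]]]])
       (auto simp: numeral_3_eq_3 simp del: sum_of_bool_eq)
qed

definition lists_rf :: "nat \<Rightarrow> recf" where
  "lists_rf r = Comp not_rf [Comp (count_bad_rf r) [Proj 0, Proj 0]]"

lemma computes_lists_rf: "computes 1 (lists_rf r) (\<lambda>xs. of_bool (list_decode (xs ! 0) \<in> lists {1..r}))"
proof -
  have "computes 1 (lists_rf r) (\<lambda>xs. 1 - (\<Sum>j<xs ! 0. of_bool (bad_symbol r ((tl_code ^^ j) (xs ! 0)))))"
    unfolding lists_rf_def
    by (rule computes_cong[OF computes_Comp1[OF computes_not_rf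
          computes_Comp2[OF computes_count_bad_rf computes_Proj computes_Proj]]]) (auto simp del: sum_of_bool_eq)
  then show ?thesis
  proof (rule computes_cong)
    fix xs :: "nat list"
    let ?S = "\<Sum>j<xs ! 0. of_bool (bad_symbol r ((tl_code ^^ j) (xs ! 0))) :: nat"
    have no_bad: "?S = 0 \<longleftrightarrow> list_decode (xs ! 0) \<in> lists {1..r}"
      unfolding list_decode_in_lists_iff by (auto simp del: sum_of_bool_eq)
    have "1 - n = of_bool (n = 0)" for n :: nat
      by (cases n) simp_all
    then show "1 - ?S = of_bool (list_decode (xs ! 0) \<in> lists {1..r})"
      by (simp only: no_bad)
  qed
qed

section \<open>Decompression and the invariance theorem\<close>

definition preimage_search_rf :: "recf \<Rightarrow> recf \<Rightarrow> recf" where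
  "preimage_search_rf d e =
     Mu (Comp (PrimRec (const_rf 1) (Comp neq_rf [Comp e [Proj 2], Proj 3])) [Comp d [Proj 0], Proj 0, Proj 1])"

text \<open>The primitive recursion on the output of d acts as a lazy conditional: e is evaluated only
  at arguments satisfying P, so the search test is total although e need only be defined there.\<close>

lemma rec_eval_preimage_search_rf:
  assumes d: "computes 1 d (\<lambda>xs. of_bool (P (xs ! 0)))"
    and e: "\<And>k y. P k \<Longrightarrow> rec_eval e [k] y \<longleftrightarrow> y = F k"
  shows "rec_eval (preimage_search_rf d e) [x] y \<longleftrightarrow> P y \<and> F y = x \<and> (\<forall>i<y. \<not> (P i \<and> F i = x))"
proof -
  let ?test = "Comp (PrimRec (const_rf 1) (Comp neq_rf [Comp e [Proj 2], Proj 3])) [Comp d [Proj 0], Proj 0, Proj 1]"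
  have test: "rec_eval ?test [k, x] v \<longleftrightarrow> v = of_bool (\<not> (P k \<and> F k = x))" for k x v
  proof -
    have "rec_eval (Comp d [Proj 0]) [k, x] b \<longleftrightarrow> b = of_bool (P k)" for b
      using computesD[OF computes_Comp1[OF d computes_Proj[of 0 2]], of "[k, x]"] by simp
    then have "rec_eval ?test [k, x] v \<longleftrightarrow>
        rec_eval (PrimRec (const_rf 1) (Comp neq_rf [Comp e [Proj 2], Proj 3])) [of_bool (P k), k, x] v"
      by (simp add: rec_eval_Comp list_all2_Cons1)
    also have "\<dots> \<longleftrightarrow> v = of_bool (\<not> (P k \<and> F k = x))"
      using computesD[OF computes_const_rf[of 2 1], of "[k, x]"] computesD[OF computes_neq_rf]
      by (cases "P k") (auto simp: rec_eval_Comp list_all2_Cons1 e)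
    finally show ?thesis .
  qed
  have "computes 2 ?test (\<lambda>xs. of_bool (\<not> (P (xs ! 0) \<and> F (xs ! 0) = xs ! 1)))"
    unfolding computes_def
  proof (intro allI impI)
    fix xs :: "nat list" and v
    assume "length xs = 2"
    then obtain k x where xs: "xs = [k, x]"
      by (metis length_0_conv length_Suc_conv numeral_2_eq_2)
    show "rec_eval ?test xs v \<longleftrightarrow> v = of_bool (\<not> (P (xs ! 0) \<and> F (xs ! 0) = xs ! 1))"
      unfolding xs test by simp
  qed
  then show ?thesis
    unfolding preimage_search_rf_def
    using rec_eval_Mu_computes[of 1 ?test _ "[x]" y] by (simp add: numeral_2_eq_2)
qed

lemma bin_code_eq_iff: "bin_code P = bin_code Q \<longleftrightarrow> P = Q"
proof -
  have "inj (of_bool :: bool \<Rightarrow> nat)"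
    by (auto simp: inj_def)
  then show ?thesis
    unfolding bin_code_def list_encode_eq by (simp add: inj_map_eq_map)
qed

lemma partial_recursive_inverse:
  assumes inj: "inj_on Z (lists {1..r})"
    and e: "\<forall>s\<in>lists {1..r}. \<forall>y. rec_eval e [str_code s] y \<longleftrightarrow> y = bin_code (Z s)"
  shows "partial_recursive_machine
    (\<lambda>P. if P \<in> Z ` lists {1..r} then Some (the_inv_into (lists {1..r}) Z P) else None)"
    (is "partial_recursive_machine ?D")
  unfolding partial_recursive_machine_def
proof (intro exI allI)
  fix P y
  let ?Q = "\<lambda>k. list_decode k \<in> lists {1..r} \<and> Z (list_decode k) = P"
  have "rec_eval e [k] v \<longleftrightarrow> v = bin_code (Z (list_decode k))" if "list_decode k \<in> lists {1..r}" for k v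
    using e that by (metis list_decode_inverse str_code_def)
  then have "rec_eval (preimage_search_rf (lists_rf r) e) [bin_code P] y \<longleftrightarrow> ?Q y \<and> (\<forall>i<y. \<not> ?Q i)"
    using rec_eval_preimage_search_rf[OF computes_lists_rf] by (simp add: bin_code_eq_iff)
  also have "\<dots> \<longleftrightarrow> (\<exists>s. ?D P = Some s \<and> y = str_code s)"
  proof (cases "P \<in> Z ` lists {1..r}")
    case True
    then obtain s where s: "s \<in> lists {1..r}" "P = Z s"
      by blast
    then have "?Q k \<longleftrightarrow> k = str_code s" for k
      using inj by (metis inj_on_eq_iff list_decode_inverse list_encode_inverse str_code_def)
    then show ?thesis
      using s the_inv_into_f_f[OF inj s(1)] by auto
  qed auto
  finally show "rec_eval (preimage_search_rf (lists_rf r) e) [bin_code P] y \<longleftrightarrow>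
      (\<exists>s. ?D P = Some s \<and> y = str_code s)" .
qed

lemma AIC_le_length: "C P = Some s \<Longrightarrow> AIC C s \<le> length P"
  unfolding AIC_def by (rule Least_le) blast

text \<open>The invariance theorem, with the decompressor of Z as the simulated machine.\<close>

lemma AIC_le_I_Z_plus_const:
  assumes "universal_machine C" and "recursive_reversible_compression r Z"
  obtains c where "\<And>s. s \<in> lists {1..r} \<Longrightarrow> AIC C s \<le> I_Z Z s + c"
proof -
  from assms(2) obtain e where inj: "inj_on Z (lists {1..r})"
    and e: "\<forall>s\<in>lists {1..r}. \<forall>y. rec_eval e [str_code s] y \<longleftrightarrow> y = bin_code (Z s)"
    unfolding recursive_reversible_compression_def by blast
  from assms(1) partial_recursive_inverse[OF inj e] obtain p where
    p: "\<And>P. C (p @ P) = (if P \<in> Z ` lists {1..r} then Some (the_inv_into (lists {1..r}) Z P) else None)"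
    unfolding universal_machine_def by blast
  have "AIC C s \<le> I_Z Z s + length p" if s: "s \<in> lists {1..r}" for s
  proof -
    have "C (p @ Z s) = Some s"
      using p[of "Z s"] the_inv_into_f_f[OF inj s] s by simp
    then show ?thesis
      using AIC_le_length by (fastforce simp: I_Z_def)
  qed
  then show thesis
    by (rule that)
qed

section \<open>Symbolic dynamics and q-entropy\<close>

lemma symb_eq_iff:
  assumes "T \<in> M \<rightarrow>\<^sub>M M" and "disjoint_family_on A {1..r}" and "(\<Union>i\<in>{1..r}. A i) = space M"
    and "x \<in> space M"
  shows "symb r T A x j = i \<longleftrightarrow> i \<in> {1..r} \<and> (T ^^ j) x \<in> A i"
proof -
  have "(T ^^ j) x \<in> space M"
    using measurable_space[OF measurable_compose_n[OF assms(1)] assms(4)] .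
  then obtain i0 where i0: "i0 \<in> {1..r}" "(T ^^ j) x \<in> A i0"
    using assms(3) by blast
  have unique: "i' = i0" if "i' \<in> {1..r}" "(T ^^ j) x \<in> A i'" for i'
    using assms(2) i0 that unfolding disjoint_family_on_def by blast
  have "symb r T A x j = i0"
    unfolding symb_def using i0 unique by (intro the_equality) blast+
  then show ?thesis
    using i0 unique by blast
qed

lemma symb_in_range:
  assumes "T \<in> M \<rightarrow>\<^sub>M M" and "disjoint_family_on A {1..r}" and "(\<Union>i\<in>{1..r}. A i) = space M"
    and "x \<in> space M"
  shows "symb r T A x j \<in> {1..r}"
  using symb_eq_iff[OF assms, of j "symb r T A x j"] by blast

lemma measurable_symb:
  assumes "T \<in> M \<rightarrow>\<^sub>M M" and "\<And>i. i \<in> {1..r} \<Longrightarrow> A i \<in> sets M"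
    and "disjoint_family_on A {1..r}" and "(\<Union>i\<in>{1..r}. A i) = space M"
  shows "symb r T A \<in> M \<rightarrow>\<^sub>M seq_space"
proof -
  have components: "(\<lambda>x. symb r T A x j) \<in> M \<rightarrow>\<^sub>M count_space UNIV" for j
    unfolding measurable_count_space_eq2_countable
  proof safe
    fix i :: nat
    have "(\<lambda>x. symb r T A x j) -` {i} \<inter> space M = (if i \<in> {1..r} then (T ^^ j) -` A i \<inter> space M else {})"
      using symb_eq_iff[OF assms(1,3,4)] by auto
    also have "\<dots> \<in> sets M"
      using assms(2) measurable_sets[OF measurable_compose_n[OF assms(1)]] by auto
    finally show "(\<lambda>x. symb r T A x j) -` {i} \<inter> space M \<in> sets M" .
  qed auto
  have "(\<lambda>x j. symb r T A x j) \<in> M \<rightarrow>\<^sub>M seq_space"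
    unfolding seq_space_def by (rule measurable_PiM_single'[OF components]) auto
  then show ?thesis
    by simp
qed

lemma prefix_str_eq_iff: "prefix_str \<omega> n = s \<longleftrightarrow> length s = n \<and> (\<forall>i<n. \<omega> i = s ! i)"
proof
  assume "prefix_str \<omega> n = s"
  then show "length s = n \<and> (\<forall>i<n. \<omega> i = s ! i)"
    unfolding prefix_str_def by auto
next
  assume "length s = n \<and> (\<forall>i<n. \<omega> i = s ! i)"
  then show "prefix_str \<omega> n = s"
    unfolding prefix_str_def by (intro nth_equalityI) auto
qed

lemma measurable_prefix_str: "(\<lambda>\<omega>. prefix_str \<omega> n) \<in> seq_space \<rightarrow>\<^sub>M count_space UNIV"
  unfolding measurable_count_space_eq2_countable
proof safe
  fix s :: "nat list"
  have "(\<lambda>\<omega>. prefix_str \<omega> n) -` {s} \<inter> space seq_space =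
      {\<omega> \<in> space seq_space. length s = n \<and> (\<forall>i<n. \<omega> i = s ! i)}"
    by (rule set_eqI) (simp add: prefix_str_eq_iff, blast)
  also have "\<dots> \<in> sets seq_space"
    unfolding seq_space_def by measurable
  finally show "(\<lambda>\<omega>. prefix_str \<omega> n) -` {s} \<inter> space seq_space \<in> sets seq_space" .
qed auto

lemma prefix_str_in_lists_iff: "(\<forall>n. prefix_str \<omega> n \<in> lists S) \<longleftrightarrow> (\<forall>j. \<omega> j \<in> S)"
proof
  assume prefixes: "\<forall>n. prefix_str \<omega> n \<in> lists S"
  show "\<forall>j. \<omega> j \<in> S"
  proof
    fix j
    show "\<omega> j \<in> S"
      using prefixes[rule_format, of "Suc j"] by (simp add: prefix_str_def)
  qed
qed (auto simp: prefix_str_def)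

lemma AE_mu_alpha_prefix_in_lists:
  assumes "T \<in> M \<rightarrow>\<^sub>M M" and "\<And>i. i \<in> {1..r} \<Longrightarrow> A i \<in> sets M"
    and "disjoint_family_on A {1..r}" and "(\<Union>i\<in>{1..r}. A i) = space M"
  shows "AE \<omega> in mu_alpha M r T A. \<forall>n. prefix_str \<omega> n \<in> lists {1..r}"
  unfolding mu_alpha_def
proof (subst AE_distr_iff[OF measurable_symb[OF assms]])
  have "{\<omega> \<in> space seq_space. \<forall>n. prefix_str \<omega> n \<in> lists {1..r}} =
      (\<Inter>j. (\<lambda>\<omega>. \<omega> j) -` {1..r} \<inter> space seq_space)"
    unfolding prefix_str_in_lists_iff by auto
  also have "\<dots> \<in> sets seq_space"
    using measurable_sets[OF measurable_component_singleton[of _ UNIV "\<lambda>_. count_space UNIV"]]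
    unfolding seq_space_def by (intro sets.countable_INT) auto
  finally show "{\<omega> \<in> space seq_space. \<forall>n. prefix_str \<omega> n \<in> lists {1..r}} \<in> sets seq_space" .
  show "AE x in M. \<forall>n. prefix_str (symb r T A x) n \<in> lists {1..r}"
    by (rule AE_I2) (unfold prefix_str_in_lists_iff, blast intro: symb_in_range[OF assms(1,3,4)])
qed

lemma tendsto_const_div_powr: "p > 0 \<Longrightarrow> (\<lambda>n. ennreal (c / real n powr p)) \<longlonglongrightarrow> 0"
proof -
  assume "p > 0"
  then have "(\<lambda>n. real n powr (- p)) \<longlonglongrightarrow> 0"
    by (intro tendsto_neg_powr filterlim_real_sequentially) simp
  then have "(\<lambda>n. c * real n powr (- p)) \<longlonglongrightarrow> c * 0"
    by (intro tendsto_mult tendsto_const)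
  then have "(\<lambda>n. c / real n powr p) \<longlonglongrightarrow> 0"
    by (simp add: powr_minus divide_inverse)
  from tendsto_ennrealI[OF this] show ?thesis
    by simp
qed

lemma nn_integral_le_plus_const:
  assumes "prob_space N" and "AE x in N. f x \<le> g x + c" and "g \<in> borel_measurable N"
  shows "(\<integral>\<^sup>+ x. f x \<partial>N) \<le> (\<integral>\<^sup>+ x. g x \<partial>N) + c"
proof -
  have "(\<integral>\<^sup>+ x. f x \<partial>N) \<le> (\<integral>\<^sup>+ x. g x + c \<partial>N)"
    using assms(2) by (rule nn_integral_mono_AE)
  also have "\<dots> = (\<integral>\<^sup>+ x. g x \<partial>N) + c"
    using assms(3) by (simp add: nn_integral_add prob_space.emeasure_space_1[OF assms(1)])
  finally show ?thesis .
qed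

lemma Limsup_eq_0_if_le_plus_tendsto_0:
  fixes f g h :: "nat \<Rightarrow> ennreal"
  assumes "\<And>n. f n \<le> g n + h n" and "limsup g = 0" and "h \<longlonglongrightarrow> 0"
  shows "limsup f = 0"
proof -
  have "(\<lambda>n. g n + h n) \<longlonglongrightarrow> 0 + 0"
    using tendsto_0_if_Limsup_eq_0_ennreal[OF assms(2)] assms(3) by (rule tendsto_add)
  then have "(\<lambda>n. g n + h n) \<longlonglongrightarrow> 0"
    by simp
  then have "f \<longlonglongrightarrow> 0"
  proof (rule tendsto_sandwich[OF _ _ tendsto_const, rotated 2])
    show "\<forall>\<^sub>F n in sequentially. 0 \<le> f n" and "\<forall>\<^sub>F n in sequentially. f n \<le> g n + h n"
      using assms(1) by simp_all
  qed
  then show ?thesis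
    by (rule lim_imp_Limsup[OF trivial_limit_sequentially])
qed

lemma q_entropy_eq_0_if_le_plus_const:
  assumes "prob_space M" and "T \<in> M \<rightarrow>\<^sub>M M" and "\<And>i. i \<in> {1..r} \<Longrightarrow> A i \<in> sets M"
    and "disjoint_family_on A {1..r}" and "(\<Union>i\<in>{1..r}. A i) = space M"
    and le: "\<And>s. s \<in> lists {1..r} \<Longrightarrow> I s \<le> J s + c" and "p > 0"
    and "q_entropy M r T A J p = 0"
  shows "q_entropy M r T A I p = 0"
proof -
  let ?N = "mu_alpha M r T A"
  let ?scaled = "\<lambda>K n \<omega>. ennreal (real (K (prefix_str \<omega> n)) / real n powr p)"
  have N: "prob_space ?N"
    unfolding mu_alpha_def by (rule prob_space.prob_space_distr[OF assms(1) measurable_symb[OF assms(2-5)]])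
  have symbols: "AE \<omega> in ?N. \<forall>n. prefix_str \<omega> n \<in> lists {1..r}"
    using assms(2-5) by (rule AE_mu_alpha_prefix_in_lists)
  have "AE \<omega> in ?N. ?scaled I n \<omega> \<le> ?scaled J n \<omega> + ennreal (c / real n powr p)" for n
    using symbols
  proof eventually_elim
    case (elim \<omega>)
    then have "real (I (prefix_str \<omega> n)) \<le> real (J (prefix_str \<omega> n)) + c"
      using le by (metis of_nat_add of_nat_mono)
    from divide_right_mono[OF this, of "real n powr p"]
    have "real (I (prefix_str \<omega> n)) / real n powr p \<le>
        real (J (prefix_str \<omega> n)) / real n powr p + c / real n powr p"
      by (simp add: add_divide_distrib)
    then have "ennreal (real (I (prefix_str \<omega> n)) / real n powr p) \<le>
        ennreal (real (J (prefix_str \<omega> n)) / real n powr p + c / real n powr p)"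
      by (rule ennreal_leI)
    then show ?case
      by (simp add: ennreal_plus)
  qed
  moreover have "?scaled J n \<in> borel_measurable ?N" for n
    unfolding mu_alpha_def measurable_distr_eq1 by (rule measurable_compose[OF measurable_prefix_str]) simp
  ultimately have "(\<integral>\<^sup>+ \<omega>. ?scaled I n \<omega> \<partial>?N) \<le> (\<integral>\<^sup>+ \<omega>. ?scaled J n \<omega> \<partial>?N) + ennreal (c / real n powr p)" for n
    by (rule nn_integral_le_plus_const[OF N])
  then show ?thesis
    using assms(8) tendsto_const_div_powr[OF \<open>p > 0\<close>] unfolding q_entropy_def
    by (rule Limsup_eq_0_if_le_plus_tendsto_0)
qed

theorem corollary5p7:
  fixes M :: "'a measure" and T :: "'a \<Rightarrow> 'a" and A :: "nat \<Rightarrow> 'a set" and r :: nat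
    and C :: "bool list \<Rightarrow> nat list option" and Z :: "nat list \<Rightarrow> bool list"
  assumes "prob_space M"
    and "T \<in> M \<rightarrow>\<^sub>M M"
    and "r \<ge> 1"
    and "\<And>i. i \<in> {1..r} \<Longrightarrow> A i \<in> sets M"
    and "disjoint_family_on A {1..r}"
    and "(\<Union>i\<in>{1..r}. A i) = space M"
    and "universal_machine C"
    and "recursive_reversible_compression r Z"
  shows "chaos_index M r T A (I_Z Z) \<ge> chaos_index M r T A (AIC C)"
proof -
  obtain c where "\<And>s. s \<in> lists {1..r} \<Longrightarrow> AIC C s \<le> I_Z Z s + c"
    using AIC_le_I_Z_plus_const[OF assms(7,8)] by blast
  then have "{p. p > 0 \<and> q_entropy M r T A (I_Z Z) p = 0} \<subseteq> {p. p > 0 \<and> q_entropy M r T A (AIC C) p = 0}"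
    using q_entropy_eq_0_if_le_plus_const[OF assms(1,2,4,5,6)] by blast
  then show ?thesis
    unfolding chaos_index_def by (intro Inf_superset_mono image_mono)
qed

end
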